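(* For all integers $t\ge0$, \[|\kappa_2(t+1)-\kappa_2(t)|\le2,\quad |\kappa_3(t+1)-\kappa_3(t)|\le6,\quad |\kappa_4(t+1)-\kappa_4(t)|\le28,\quad |\kappa_5(t+1)-\kappa_5(t)|\le240.\]
   Context: $s(n)$ is the number of $1$s in the binary expansion of $n\ge0$. For integers $j$ and $t\ge0$, $\delta(j,t)=\lim_{N\to\infty}\frac1N|\{0\le n<N: s(n+t)-s(n)=j\}|$, a probability distribution on $\mathbb Z$. $\kappa_j(t)$ denotes the $j$-th cumulant of this distribution, i.e. the real numbers with $\log\sum_{k\in\mathbb Z}\delta(k,t)e^{2\pi i k\vartheta}=\sum_{j\ge0}\frac{\kappa_j(t)}{j!}(2\pi i\vartheta)^j$ for $\vartheta$ near $0$. *)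

theory Defs
  imports "HOL-Analysis.Analysis"
begin

fun bsum :: "nat \<Rightarrow> nat" where
  "bsum n = (if n = 0 then 0 else n mod 2 + bsum (n div 2))"

declare bsum.simps[simp del]

definition delta :: "int \<Rightarrow> nat \<Rightarrow> real" where
  "delta j t = lim (\<lambda>N. real (card {n. n < N \<and> int (bsum (n + t)) - int (bsum n) = j}) / real N)"

definition charfun_delta :: "nat \<Rightarrow> real \<Rightarrow> complex" where
  "charfun_delta t \<theta> = infsum (\<lambda>k::int. complex_of_real (delta k t) * exp (2 * pi * \<i> * of_int k * of_real \<theta>)) UNIV"

definition kappa :: "nat \<Rightarrow> nat \<Rightarrow> real" where
  "kappa j t = (THE c :: nat \<Rightarrow> real. \<forall>\<^sub>F \<theta> in nhds (0::real).
      (\<lambda>m. complex_of_real (c m) / of_nat (fact m) * (2 * pi * \<i> * of_real \<theta>) ^ m)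
        sums Ln (charfun_delta t \<theta>)) j"

end

theory Submission
  imports Defs "HOL-Complex_Analysis.Complex_Analysis"
begin

(* The distributions \<delta>(-,t) satisfy \<delta>(j,2t) = \<delta>(j,t) and 2 \<delta>(j,2t+1) = \<delta>(j-1,t) + \<delta>(j+1,t+1).
   Hence the moment generating function M_t(w) = \<Sum>_j \<delta>(j,t) e^(jw) satisfies M_2t = M_t and
   2 M_(2t+1) = e^w M_t + e^(-w) M_(t+1), which defines M_t as a holomorphic function near 0
   (with M_1 = e^w / (2 - e^(-w))), and \<kappa>_j(t) is j! times the j-th Taylor coefficient of log M_t.
   For E_t = M_(t+1) / M_t and K_t = log E_t one gets 2 E_2t = e^w + e^(-w) E_t and
   K_2t + K_(2t+1) = K_t. Comparing coefficients, c_j(t) = [w^j] K_t = (\<kappa>_j(t+1) - \<kappa>_j(t)) / j!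
   satisfies c_j(2t) = c_j(t)/2 + d_j(t) and c_j(2t+1) = c_j(t)/2 - d_j(t), where d_j only
   involves c_2, ..., c_(j-1). Bounding d_j successively for j = 2, ..., 5 gives
   |c_j| \<le> 1, 1, 7/6, 2 by induction on t. *)

section \<open>Recursions along binary expansions\<close>

lemma binary_induct [case_names 0 1 double Suc_double]:
  assumes "P 0" "P 1"
    and "\<And>u. 1 \<le> u \<Longrightarrow> P u \<Longrightarrow> P (2 * u)"
    and "\<And>u. 1 \<le> u \<Longrightarrow> P u \<Longrightarrow> P (Suc u) \<Longrightarrow> P (Suc (2 * u))"
  shows "P t"
proof (induction t rule: less_induct)
  case (less t)
  show ?case
  proof (cases "t \<le> 1")
    case True
    then show ?thesis
      using assms(1,2) by (cases t) auto
  next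
    case False
    define u where "u = t div 2"
    have u: "1 \<le> u" "u < t"
      using False by (auto simp: u_def)
    have "t = 2 * u \<or> t = Suc (2 * u)"
      unfolding u_def by presburger
    then show ?thesis
      using assms(3,4) less u by auto
  qed
qed

lemma abs_le_if_halving_recursion:
  fixes x \<delta> :: "nat \<Rightarrow> real"
  assumes double: "\<And>t. x (2 * t) = x t / 2 + \<delta> t"
    and Suc_double: "\<And>t. x (Suc (2 * t)) = x t / 2 - \<delta> t"
    and small: "\<And>t. \<bar>\<delta> t\<bar> \<le> B / 2"
  shows "\<bar>x t\<bar> \<le> B"
proof (induction t rule: nat_bit_induct)
  case zero
  have "x 0 = 2 * \<delta> 0"
    using double[of 0] by simp
  then show ?case
    using small[of 0] by simp
next
  case (even u)
  then show ?case
    using double[of u] small[of u] unfolding abs_le_iff by auto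
next
  case (odd u)
  then show ?case
    using Suc_double[of u] small[of u] unfolding abs_le_iff by auto
qed

lemma card_less_split_parity:
  "card {n. n < N \<and> P n} =
     card {m. m < (N + 1) div 2 \<and> P (2 * m)} + card {m. m < N div 2 \<and> P (Suc (2 * m))}"
proof -
  have card_eq_sum: "card {n. n < M \<and> Q n} = (\<Sum>n<M. if Q n then 1 else 0)"
    for M :: nat and Q
  proof -
    have "{n. n < M \<and> Q n} = {n \<in> {..<M}. Q n}"
      by auto
    then have "card {n. n < M \<and> Q n} = (\<Sum>n\<in>{n \<in> {..<M}. Q n}. 1)"
      by simp
    also have "\<dots> = (\<Sum>n<M. if Q n then 1 else 0)"
      by (rule sum.inter_filter) simp
    finally show ?thesis .
  qed
  have pairs: "(\<Sum>n<2 * k. g n) = (\<Sum>m<k. g (2 * m)) + (\<Sum>m<k. g (Suc (2 * m)))"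
    for k and g :: "nat \<Rightarrow> nat"
    by (induction k) (simp_all add: algebra_simps)
  show ?thesis
  proof (cases "even N")
    case True
    then obtain k where "N = 2 * k"
      by (rule evenE)
    then show ?thesis
      unfolding card_eq_sum by (simp add: pairs)
  next
    case False
    then obtain k where "N = Suc (2 * k)"
      by (auto elim: oddE)
    then show ?thesis
      unfolding card_eq_sum by (simp add: pairs)
  qed
qed

lemma half_index_asymptotics:
  fixes h :: "nat \<Rightarrow> nat"
  assumes h: "\<And>N. \<bar>2 * real (h N) - real N\<bar> \<le> 1"
  shows "(\<lambda>N. real (h N) / real N) \<longlonglongrightarrow> 1 / 2" and "filterlim h at_top sequentially"
proof -
  have "(\<lambda>N. real (h N) / real N - 1 / 2) \<longlonglongrightarrow> 0"
  proof (rule Lim_null_comparison)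
    show "\<forall>\<^sub>F N in sequentially. norm (real (h N) / real N - 1 / 2) \<le> (1 / 2) / real N"
      using eventually_gt_at_top[of 0]
    proof eventually_elim
      case (elim N)
      have "real (h N) / real N - 1 / 2 = (2 * real (h N) - real N) / (2 * real N)"
        using elim by (simp add: field_simps)
      then show ?case
        using h[of N] elim by (simp add: abs_divide divide_right_mono)
    qed
  qed (rule lim_const_over_n)
  then have "(\<lambda>N. real (h N) / real N - 1 / 2 + 1 / 2) \<longlonglongrightarrow> 0 + 1 / 2"
    by (rule tendsto_add) simp
  then show "(\<lambda>N. real (h N) / real N) \<longlonglongrightarrow> 1 / 2"
    by simp
  show "filterlim h at_top sequentially"
    unfolding filterlim_at_top
  proof
    fix Z
    show "\<forall>\<^sub>F N in sequentially. Z \<le> h N"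
      using eventually_ge_at_top[of "2 * Z + 1"]
    proof eventually_elim
      case (elim N)
      then have "2 * real Z + 1 \<le> real N"
        by linarith
      then have "real Z \<le> real (h N)"
        using h[of N] by (simp add: abs_le_iff)
      then show ?case
        by simp
    qed
  qed
qed

lemma density_at_half_index:
  fixes F h :: "nat \<Rightarrow> nat"
  assumes F: "(\<lambda>N. real (F N) / real N) \<longlonglongrightarrow> a"
    and h: "\<And>N. \<bar>2 * real (h N) - real N\<bar> \<le> 1"
  shows "(\<lambda>N. real (F (h N)) / real N) \<longlonglongrightarrow> a / 2"
proof -
  note h_asymp = half_index_asymptotics[OF h]
  have "(\<lambda>N. real (F (h N)) / real (h N) * (real (h N) / real N)) \<longlonglongrightarrow> a * (1 / 2)"
    by (intro tendsto_mult h_asymp(1) filterlim_compose[OF F h_asymp(2)])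
  moreover have "\<forall>\<^sub>F N in sequentially.
      real (F (h N)) / real (h N) * (real (h N) / real N) = real (F (h N)) / real N"
    using h_asymp(2)[unfolded filterlim_at_top, rule_format, of 1] eventually_gt_at_top[of 0]
    by eventually_elim simp
  ultimately show ?thesis
    using Lim_transform_eventually by fastforce
qed

lemma density_of_halves:
  fixes F G :: "nat \<Rightarrow> nat"
  assumes "(\<lambda>N. real (F N) / real N) \<longlonglongrightarrow> a" "(\<lambda>N. real (G N) / real N) \<longlonglongrightarrow> b"
  shows "(\<lambda>N. real (F ((N + 1) div 2) + G (N div 2)) / real N) \<longlonglongrightarrow> (a + b) / 2"
proof -
  have "\<bar>2 * real ((N + 1) div 2) - real N\<bar> \<le> 1" "\<bar>2 * real (N div 2) - real N\<bar> \<le> 1" for N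
    by linarith+
  then have "(\<lambda>N. real (F ((N + 1) div 2)) / real N + real (G (N div 2)) / real N)
      \<longlonglongrightarrow> a / 2 + b / 2"
    by (intro tendsto_add density_at_half_index assms)
  then show ?thesis
    by (simp add: add_divide_distrib)
qed

section \<open>Power series\<close>

lemma deriv_in_Reals_if_Reals_on_segment:
  fixes G :: "complex \<Rightarrow> complex"
  assumes holo: "G holomorphic_on ball 0 r"
    and real: "\<And>x::real. \<bar>x\<bar> < r \<Longrightarrow> G (of_real x) \<in> \<real>"
    and x: "\<bar>x\<bar> < r"
  shows "deriv G (of_real x) \<in> \<real>"
proof -
  have "(G has_field_derivative deriv G (of_real x)) (at (of_real x))"
    using x by (intro holomorphic_derivI[OF holo]) auto
  then have Im_deriv: "((\<lambda>y. Im (G (of_real y))) has_field_derivative Im (deriv G (of_real x))) (at x)"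
    by (intro has_field_derivative_Im has_vector_derivative_real_field)
  have "\<forall>\<^sub>F y in nhds x. y \<in> {-r<..<r}"
    using x by (intro eventually_nhds_in_open) auto
  then have "\<forall>\<^sub>F y in nhds x. Im (G (of_real y)) = 0"
    by eventually_elim (use real in \<open>auto simp: complex_is_Real_iff\<close>)
  from iffD1[OF DERIV_cong_ev[OF refl this refl] Im_deriv]
  have "Im (deriv G (of_real x)) = 0"
    by (rule DERIV_unique[OF _ DERIV_const])
  then show ?thesis
    by (simp add: complex_is_Real_iff)
qed

lemma higher_deriv_in_Reals_if_Reals_on_segment:
  fixes G :: "complex \<Rightarrow> complex"
  assumes holo: "G holomorphic_on ball 0 r"
    and real: "\<And>x::real. \<bar>x\<bar> < r \<Longrightarrow> G (of_real x) \<in> \<real>"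
    and x: "\<bar>x\<bar> < r"
  shows "(deriv ^^ n) G (of_real x) \<in> \<real>"
  using x
proof (induction n arbitrary: x)
  case (Suc n)
  have "deriv ((deriv ^^ n) G) (of_real x) \<in> \<real>"
    by (rule deriv_in_Reals_if_Reals_on_segment[OF holomorphic_higher_deriv[OF holo open_ball] Suc.IH Suc.prems])
  then show ?case
    by simp
qed (use real in simp)

lemma powser_vanishing_on_segment_imp_zero:
  fixes b :: "nat \<Rightarrow> 'a::{real_normed_field,banach}"
  assumes "z \<noteq> 0" "\<epsilon> > 0"
    and vanish: "\<And>s. 0 < s \<Longrightarrow> s < \<epsilon> \<Longrightarrow> (\<lambda>n. b n * (z * of_real s) ^ n) sums 0"
  shows "b n = 0"
proof (rule ccontr)
  assume "b n \<noteq> 0"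
  \<comment> \<open>The factor x makes f vanish at 0, so that \<open>powser_0_nonzero\<close> covers every coefficient of b.\<close>
  define a where "a m = (case m of 0 \<Rightarrow> 0 | Suc k \<Rightarrow> b k)" for m
  define f where "f x = x * (\<Sum>m. b m * x ^ m)" for x :: 'a
  define r where "r = \<epsilon> / 2 * norm z"
  have r: "r > 0"
    using assms by (simp add: r_def)
  have "summable (\<lambda>m. b m * (z * of_real (\<epsilon> / 2)) ^ m)"
    using vanish[of "\<epsilon> / 2"] assms(2) by (simp add: sums_summable)
  then have summable: "summable (\<lambda>m. b m * x ^ m)" if "norm x < r" for x
    by (rule powser_inside) (use that assms(2) in \<open>simp add: r_def norm_mult mult_ac\<close>)
  have "(\<lambda>m. x * (b m * x ^ m)) sums f x" if "norm x < r" for x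
    unfolding f_def by (intro sums_mult summable_sums summable that)
  then have shifted: "(\<lambda>m. a (Suc m) * x ^ Suc m) sums f x" if "norm x < r" for x
    using that by (simp add: a_def mult.left_commute)
  have a_sums: "(\<lambda>m. a m * (x - 0) ^ m) sums f x" if "norm (x - 0) < r" for x
  proof -
    have "(\<lambda>m. a m * x ^ m) sums (f x + a 0 * x ^ 0)"
      using shifted that by (intro sums_Suc_iff[THEN iffD1]) simp
    then show ?thesis
      by (simp add: a_def)
  qed
  obtain s where s: "0 < s" and nz: "\<And>x. x \<in> cball 0 s - {0} \<Longrightarrow> f x \<noteq> 0"
    by (rule powser_0_nonzero[OF r a_sums, of "Suc n"]) (use \<open>b n \<noteq> 0\<close> in \<open>simp_all add: a_def f_def\<close>)
  define s' where "s' = min (s / norm z) (\<epsilon> / 2)"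
  have s': "0 < s'" "s' < \<epsilon>"
    using s assms by (auto simp: s'_def)
  have "f (z * of_real s') = 0"
    using sums_unique[OF vanish[OF s']] by (simp add: f_def)
  moreover have "z * of_real s' \<in> cball 0 s - {0}"
    using s s' assms by (auto simp: s'_def norm_mult field_simps min_def)
  ultimately show False
    using nz by blast
qed

lemma powser_coeffs_unique_on_segment:
  fixes a b :: "nat \<Rightarrow> 'a::{real_normed_field,banach}"
  assumes "z \<noteq> 0"
    and "\<forall>\<^sub>F s in nhds (0::real). (\<lambda>n. a n * (z * of_real s) ^ n) sums g s"
    and "\<forall>\<^sub>F s in nhds (0::real). (\<lambda>n. b n * (z * of_real s) ^ n) sums g s"
  shows "a = b"
proof
  fix n
  obtain d where "0 < d" and d: "\<And>s. dist s 0 < d \<Longrightarrow>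
      (\<lambda>n. a n * (z * of_real s) ^ n) sums g s \<and> (\<lambda>n. b n * (z * of_real s) ^ n) sums g s"
    using eventually_conj[OF assms(2,3)] unfolding eventually_nhds_metric by blast
  have "(\<lambda>n. (a n - b n) * (z * of_real s) ^ n) sums 0" if "0 < s" "s < d" for s
  proof -
    have "dist s 0 < d"
      using that by simp
    from sums_diff[OF conjunct1[OF d[OF this]] conjunct2[OF d[OF this]]] show ?thesis
      by (simp add: left_diff_distrib)
  qed
  from powser_vanishing_on_segment_imp_zero[OF assms(1) \<open>0 < d\<close> this]
  show "a n = b n"
    by simp
qed

lemma fps_log_deriv_nth:
  fixes E K :: "complex fps"
  assumes "fps_deriv E = E * fps_deriv K"
  shows "fps_nth E 1 = fps_nth E 0 * fps_nth K 1"
    and "2 * fps_nth E 2 = 2 * fps_nth E 0 * fps_nth K 2 + fps_nth E 1 * fps_nth K 1"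
    and "3 * fps_nth E 3 = 3 * fps_nth E 0 * fps_nth K 3 + 2 * fps_nth E 1 * fps_nth K 2
                         + fps_nth E 2 * fps_nth K 1"
    and "4 * fps_nth E 4 = 4 * fps_nth E 0 * fps_nth K 4 + 3 * fps_nth E 1 * fps_nth K 3
                         + 2 * fps_nth E 2 * fps_nth K 2 + fps_nth E 3 * fps_nth K 1"
    and "5 * fps_nth E 5 = 5 * fps_nth E 0 * fps_nth K 5 + 4 * fps_nth E 1 * fps_nth K 4
                         + 3 * fps_nth E 2 * fps_nth K 3 + 2 * fps_nth E 3 * fps_nth K 2
                         + fps_nth E 4 * fps_nth K 1"
proof -
  have nth: "fps_nth (fps_deriv E) n = fps_nth (E * fps_deriv K) n" for n
    using assms by simp
  note simps = fps_mult_nth eval_nat_numeral atMost_Suc algebra_simps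
  show "fps_nth E 1 = fps_nth E 0 * fps_nth K 1"
    using nth[of 0] by (simp add: simps)
  show "2 * fps_nth E 2 = 2 * fps_nth E 0 * fps_nth K 2 + fps_nth E 1 * fps_nth K 1"
    using nth[of 1] by (simp add: simps)
  show "3 * fps_nth E 3 = 3 * fps_nth E 0 * fps_nth K 3 + 2 * fps_nth E 1 * fps_nth K 2
                         + fps_nth E 2 * fps_nth K 1"
    using nth[of 2] by (simp add: simps)
  show "4 * fps_nth E 4 = 4 * fps_nth E 0 * fps_nth K 4 + 3 * fps_nth E 1 * fps_nth K 3
                         + 2 * fps_nth E 2 * fps_nth K 2 + fps_nth E 3 * fps_nth K 1"
    using nth[of 3] by (simp add: simps)
  show "5 * fps_nth E 5 = 5 * fps_nth E 0 * fps_nth K 5 + 4 * fps_nth E 1 * fps_nth K 4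
                         + 3 * fps_nth E 2 * fps_nth K 3 + 2 * fps_nth E 3 * fps_nth K 2
                         + fps_nth E 4 * fps_nth K 1"
    using nth[of 4] by (simp add: simps)
qed

lemma fps_log_deriv_low_coeffs:
  fixes E K :: "complex fps"
  assumes "fps_deriv E = E * fps_deriv K" "fps_nth E 0 = 1" "fps_nth K 1 = 0"
  shows "fps_nth E 1 = 0" "fps_nth E 2 = fps_nth K 2" "fps_nth E 3 = fps_nth K 3"
    "fps_nth E 4 = fps_nth K 4 + (fps_nth K 2)\<^sup>2 / 2"
    "fps_nth E 5 = fps_nth K 5 + fps_nth K 2 * fps_nth K 3"
  using fps_log_deriv_nth[OF assms(1)] assms(2,3) by algebra+

lemma log_coeffs_of_exp_average:
  fixes E K F L :: "complex fps"
  assumes E: "fps_deriv E = E * fps_deriv K" "fps_nth E 0 = 1"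
    and F: "fps_deriv F = F * fps_deriv L"
    and average: "2 * F = fps_exp 1 + fps_exp (-1) * E"
  shows "fps_nth L 1 = fps_nth K 1 / 2"
    and "fps_nth K 1 = 0 \<Longrightarrow> fps_nth L 2 = fps_nth K 2 / 2 + 1 / 2"
    and "fps_nth K 1 = 0 \<Longrightarrow> fps_nth L 3 = fps_nth K 3 / 2 - fps_nth K 2 / 2"
    and "fps_nth K 1 = 0 \<Longrightarrow>
      fps_nth L 4 = fps_nth K 4 / 2 + ((fps_nth K 2)\<^sup>2 - 4 * fps_nth K 3) / 8 - 1 / 12"
    and "fps_nth K 1 = 0 \<Longrightarrow>
      fps_nth L 5 = fps_nth K 5 / 2 + (fps_nth K 2 * fps_nth K 3 - 2 * fps_nth K 4) / 4
                    + fps_nth K 2 / 6"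
proof -
  have avg: "2 * fps_nth F n = 1 / fact n + (\<Sum>i\<le>n. fps_nth E i * (-1) ^ (n - i) / fact (n - i))"
    for n
  proof -
    have "2 * fps_nth F n = fps_nth (fps_exp 1 + fps_exp (-1) * E) n"
      using average by (metis fps_mult_numeral_left)
    then show ?thesis
      by (simp add: fps_mult_nth fps_exp_nth atLeast0AtMost mult.commute)
  qed
  have avg_nth:
    "2 * fps_nth F 0 = 1 + fps_nth E 0"
    "2 * fps_nth F 1 = 1 + fps_nth E 1 - fps_nth E 0"
    "2 * fps_nth F 2 = 1 / 2 + fps_nth E 2 - fps_nth E 1 + fps_nth E 0 / 2"
    "2 * fps_nth F 3 = 1 / 6 + fps_nth E 3 - fps_nth E 2 + fps_nth E 1 / 2 - fps_nth E 0 / 6"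
    "2 * fps_nth F 4 = 1 / 24 + fps_nth E 4 - fps_nth E 3 + fps_nth E 2 / 2 - fps_nth E 1 / 6
                       + fps_nth E 0 / 24"
    "2 * fps_nth F 5 = 1 / 120 + fps_nth E 5 - fps_nth E 4 + fps_nth E 3 / 2 - fps_nth E 2 / 6
                       + fps_nth E 1 / 24 - fps_nth E 0 / 120"
    using avg[of 0] avg[of 1] avg[of 2] avg[of 3] avg[of 4] avg[of 5]
    by (simp_all add: eval_nat_numeral atMost_Suc fact_Suc)
  have F0: "fps_nth F 0 = 1"
    using avg_nth(1) E(2) by simp
  have E1: "fps_nth E 1 = fps_nth K 1"
    using fps_log_deriv_nth(1)[OF E(1)] E(2) by simp
  show L1: "fps_nth L 1 = fps_nth K 1 / 2"
    using fps_log_deriv_nth(1)[OF F] avg_nth(2) F0 E(2) E1 by (simp add: field_simps)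
  assume K1: "fps_nth K 1 = 0"
  note EK = fps_log_deriv_low_coeffs[OF E K1]
  have "fps_nth L 1 = 0"
    using L1 K1 by simp
  note FL = fps_log_deriv_low_coeffs[OF F F0 this]
  show "fps_nth L 2 = fps_nth K 2 / 2 + 1 / 2"
    using avg_nth EK FL E(2) by algebra
  show "fps_nth L 3 = fps_nth K 3 / 2 - fps_nth K 2 / 2"
    using avg_nth EK FL E(2) by algebra
  show "fps_nth L 4 = fps_nth K 4 / 2 + ((fps_nth K 2)\<^sup>2 - 4 * fps_nth K 3) / 8 - 1 / 12"
    using avg_nth EK FL E(2) by algebra
  show "fps_nth L 5 = fps_nth K 5 / 2 + (fps_nth K 2 * fps_nth K 3 - 2 * fps_nth K 4) / 4
                    + fps_nth K 2 / 6"
    using avg_nth EK FL E(2) by algebra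
qed

section \<open>Binary digit sums and the distributions \<open>delta\<close>\<close>

lemma bsum_double [simp]: "bsum (2 * m) = bsum m"
  by (cases "m = 0") (simp_all add: bsum.simps[of "2 * m"])

lemma bsum_Suc_double [simp]: "bsum (Suc (2 * m)) = Suc (bsum m)"
  by (subst bsum.simps) simp

lemma bsum_Suc_le: "bsum (Suc n) \<le> Suc (bsum n)"
proof (induction n rule: nat_bit_induct)
  case zero
  then show ?case
    using bsum_Suc_double[of 0] by simp
next
  case (even n)
  then show ?case
    by simp
next
  case (odd n)
  have "bsum (Suc (Suc (2 * n))) = bsum (Suc n)"
    using bsum_double[of "Suc n"] by simp
  with odd.IH show ?case
    by simp
qed

definition bsum_diff :: "nat \<Rightarrow> nat \<Rightarrow> int" where
  "bsum_diff t n = int (bsum (n + t)) - int (bsum n)"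

lemma bsum_diff_double_double [simp]: "bsum_diff (2 * t) (2 * n) = bsum_diff t n"
  unfolding bsum_diff_def by (metis bsum_double distrib_left)

lemma bsum_diff_double_Suc_double [simp]: "bsum_diff (2 * t) (Suc (2 * n)) = bsum_diff t n"
proof -
  have "bsum (Suc (2 * n) + 2 * t) = Suc (bsum (n + t))"
    using bsum_Suc_double[of "n + t"] by (simp add: algebra_simps)
  then show ?thesis
    unfolding bsum_diff_def by simp
qed

lemma bsum_diff_Suc_double_double [simp]: "bsum_diff (Suc (2 * t)) (2 * n) = bsum_diff t n + 1"
proof -
  have "bsum (2 * n + Suc (2 * t)) = Suc (bsum (n + t))"
    using bsum_Suc_double[of "n + t"] by (simp add: algebra_simps)
  then show ?thesis
    unfolding bsum_diff_def by simp
qed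

lemma bsum_diff_Suc_double_Suc_double [simp]:
  "bsum_diff (Suc (2 * t)) (Suc (2 * n)) = bsum_diff (Suc t) n - 1"
proof -
  have "bsum (Suc (2 * n) + Suc (2 * t)) = bsum (n + Suc t)"
    using bsum_double[of "n + Suc t"] by (simp add: algebra_simps)
  then show ?thesis
    unfolding bsum_diff_def by simp
qed

definition diff_count :: "nat \<Rightarrow> int \<Rightarrow> nat \<Rightarrow> nat" where
  "diff_count t j N = card {n. n < N \<and> bsum_diff t n = j}"

lemma diff_count_double:
  "diff_count (2 * t) j N = diff_count t j ((N + 1) div 2) + diff_count t j (N div 2)"
  unfolding diff_count_def by (subst card_less_split_parity) simp

lemma diff_count_Suc_double:
  "diff_count (Suc (2 * t)) j N =
     diff_count t (j - 1) ((N + 1) div 2) + diff_count (Suc t) (j + 1) (N div 2)"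
  unfolding diff_count_def by (subst card_less_split_parity) (simp add: eq_diff_eq diff_eq_eq)

lemma diff_count_0: "diff_count 0 j N = (if j = 0 then N else 0)"
  by (simp add: diff_count_def bsum_diff_def)

lemma diff_count_1_eq_0:
  assumes "j \<ge> 2"
  shows "diff_count 1 j N = 0"
proof -
  have "bsum_diff 1 n \<noteq> j" for n
    using bsum_Suc_le[of n] assms by (simp add: bsum_diff_def)
  then show ?thesis
    by (simp add: diff_count_def)
qed

lemma diff_count_0_density:
  "(\<lambda>N. real (diff_count 0 j N) / real N) \<longlonglongrightarrow> (if j = 0 then 1 else 0)"
proof (rule tendsto_eventually)
  show "\<forall>\<^sub>F N in sequentially. real (diff_count 0 j N) / real N = (if j = 0 then 1 else 0)"
    using eventually_gt_at_top[of 0] by eventually_elim (simp add: diff_count_0)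
qed

(* For t = 1 the odd recursion refers back to t = 1 at j + 1; the induction descends from j = 2,
   where the count vanishes. *)
lemma diff_count_1_density_convergent:
  "convergent (\<lambda>N. real (diff_count 1 j N) / real N)"
proof -
  have below: "convergent (\<lambda>N. real (diff_count 1 (2 - int k) N) / real N)" for k
  proof (induction k)
    case 0
    then show ?case
      using diff_count_1_eq_0[of 2] by (simp add: convergent_const)
  next
    case (Suc k)
    then obtain L where "(\<lambda>N. real (diff_count 1 (2 - int (Suc k) + 1) N) / real N) \<longlonglongrightarrow> L"
      by (auto simp: convergent_def algebra_simps)
    from density_of_halves[OF diff_count_0_density this]
    show ?case
      using diff_count_Suc_double[of 0 "2 - int (Suc k)"] by (auto simp: convergent_def)
  qed
  show ?thesis
  proof (cases "j \<ge> 2")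
    case True
    then show ?thesis
      using diff_count_1_eq_0[OF True] by (simp add: convergent_const)
  next
    case False
    then show ?thesis
      using below[of "nat (2 - j)"] by simp
  qed
qed

lemma diff_count_density_convergent: "convergent (\<lambda>N. real (diff_count t j N) / real N)"
proof (induction t arbitrary: j rule: binary_induct)
  case 0
  then show ?case
    using diff_count_0_density convergent_def by blast
next
  case 1
  then show ?case
    by (rule diff_count_1_density_convergent)
next
  case (double u)
  then obtain L where "(\<lambda>N. real (diff_count u j N) / real N) \<longlonglongrightarrow> L"
    by (auto simp: convergent_def)
  from density_of_halves[OF this this] show ?case
    unfolding diff_count_double convergent_def by blast
next
  case (Suc_double u)
  obtain L1 where "(\<lambda>N. real (diff_count u (j - 1) N) / real N) \<longlonglongrightarrow> L1"
    using Suc_double.IH(1) convergent_def by blast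
  moreover obtain L2 where "(\<lambda>N. real (diff_count (Suc u) (j + 1) N) / real N) \<longlonglongrightarrow> L2"
    using Suc_double.IH(2) convergent_def by blast
  ultimately show ?case
    using density_of_halves
    unfolding diff_count_Suc_double convergent_def by blast
qed

lemma delta_LIMSEQ: "(\<lambda>N. real (diff_count t j N) / real N) \<longlonglongrightarrow> delta j t"
  using diff_count_density_convergent
  by (simp add: delta_def diff_count_def bsum_diff_def convergent_LIMSEQ_iff)

lemma delta_0: "delta j 0 = (if j = 0 then 1 else 0)"
  using LIMSEQ_unique[OF delta_LIMSEQ diff_count_0_density] .

lemma delta_double: "delta j (2 * t) = delta j t"
proof -
  have "(\<lambda>N. real (diff_count (2 * t) j N) / real N) \<longlonglongrightarrow> (delta j t + delta j t) / 2"
    unfolding diff_count_double by (rule density_of_halves[OF delta_LIMSEQ delta_LIMSEQ])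
  from LIMSEQ_unique[OF delta_LIMSEQ this] show ?thesis
    by simp
qed

lemma delta_Suc_double: "delta j (Suc (2 * t)) = (delta (j - 1) t + delta (j + 1) (Suc t)) / 2"
proof -
  have "(\<lambda>N. real (diff_count (Suc (2 * t)) j N) / real N)
      \<longlonglongrightarrow> (delta (j - 1) t + delta (j + 1) (Suc t)) / 2"
    unfolding diff_count_Suc_double by (rule density_of_halves[OF delta_LIMSEQ delta_LIMSEQ])
  from LIMSEQ_unique[OF delta_LIMSEQ this] show ?thesis .
qed

lemma delta_nonneg: "delta j t \<ge> 0"
  by (rule LIMSEQ_le_const[OF delta_LIMSEQ]) auto

lemma sum_delta_le_1:
  assumes "finite S"
  shows "(\<Sum>j\<in>S. delta j t) \<le> 1"
proof (rule LIMSEQ_le_const2)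
  show "(\<lambda>N. \<Sum>j\<in>S. real (diff_count t j N) / real N) \<longlonglongrightarrow> (\<Sum>j\<in>S. delta j t)"
    by (intro tendsto_sum delta_LIMSEQ)
  show "\<exists>N0. \<forall>N\<ge>N0. (\<Sum>j\<in>S. real (diff_count t j N) / real N) \<le> 1"
  proof (intro exI allI impI)
    fix N :: nat assume "1 \<le> N"
    have "(\<Sum>j\<in>S. diff_count t j N) = card (\<Union>j\<in>S. {n. n < N \<and> bsum_diff t n = j})"
      unfolding diff_count_def by (rule card_UN_disjoint[symmetric]) (use assms in auto)
    also have "\<dots> \<le> card {..<N}"
      by (rule card_mono) auto
    finally have le: "real (\<Sum>j\<in>S. diff_count t j N) \<le> real N"
      by (simp del: of_nat_sum)
    have "(\<Sum>j\<in>S. real (diff_count t j N) / real N) = real (\<Sum>j\<in>S. diff_count t j N) / real N"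
      by (simp add: sum_divide_distrib)
    also have "\<dots> \<le> 1"
      using le \<open>1 \<le> N\<close> by (simp add: divide_le_eq_1 del: of_nat_sum)
    finally show "(\<Sum>j\<in>S. real (diff_count t j N) / real N) \<le> 1" .
  qed
qed

lemma delta_summable: "(\<lambda>j. delta j t) summable_on UNIV"
  by (rule nonneg_bdd_above_summable_on[OF delta_nonneg bdd_aboveI[of _ 1]])
    (auto intro: sum_delta_le_1)

section \<open>The moment generating function\<close>

lemma norm_exp_2pi_i: "norm (exp (2 * pi * \<i> * of_int k * of_real \<theta>)) = 1"
proof -
  have "2 * pi * \<i> * of_int k * of_real \<theta> = \<i> * complex_of_real (2 * pi * of_int k * \<theta>)"
    by simp
  then show ?thesis
    by (simp only: norm_exp_i_times)
qed

lemma summable_on_int_shift: "(\<lambda>k::int. f (k + c)) summable_on UNIV \<longleftrightarrow> f summable_on UNIV"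
  using summable_on_reindex_bij_betw[OF bij_plus_right] .

lemma infsum_int_shift: "infsum (\<lambda>k::int. f (k + c)) UNIV = infsum f UNIV"
  using infsum_reindex_bij_betw[OF bij_plus_right] .

lemma exp_2pi_i_int_shift:
  "exp (2 * pi * \<i> * of_int k * of_real \<theta>) =
     exp (of_int c * (2 * pi * \<i> * of_real \<theta>)) * exp (2 * pi * \<i> * of_int (k - c) * of_real \<theta>)"
proof -
  have "2 * pi * \<i> * of_int k * complex_of_real \<theta>
      = of_int c * (2 * pi * \<i> * of_real \<theta>) + 2 * pi * \<i> * of_int (k - c) * complex_of_real \<theta>"
    by (simp add: algebra_simps)
  then show ?thesis
    by (simp only: exp_add)
qed

lemma charfun_delta_summable:
  "(\<lambda>k. complex_of_real (delta k t) * exp (2 * pi * \<i> * of_int k * of_real \<theta>)) summable_on UNIV"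
proof (rule abs_summable_summable)
  have "(\<lambda>k. norm (complex_of_real (delta k t) * exp (2 * pi * \<i> * of_int k * of_real \<theta>)))
      = (\<lambda>k. delta k t)"
    by (simp add: norm_mult norm_exp_2pi_i delta_nonneg)
  then show "(\<lambda>k. norm (complex_of_real (delta k t) * exp (2 * pi * \<i> * of_int k * of_real \<theta>)))
      summable_on UNIV"
    using delta_summable by simp
qed

lemma charfun_delta_0: "charfun_delta 0 \<theta> = 1"
proof -
  have "charfun_delta 0 \<theta> =
      infsum (\<lambda>k. complex_of_real (delta k 0) * exp (2 * pi * \<i> * of_int k * of_real \<theta>)) {0}"
    unfolding charfun_delta_def by (rule infsum_cong_neutral) (auto simp: delta_0)
  then show ?thesis
    by (simp add: delta_0)
qed

lemma charfun_delta_double: "charfun_delta (2 * t) \<theta> = charfun_delta t \<theta>"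
  by (simp add: charfun_delta_def delta_double)

lemma charfun_delta_Suc_double:
  fixes \<theta> :: real and w :: complex
  defines "w \<equiv> 2 * pi * \<i> * of_real \<theta>"
  shows "charfun_delta (Suc (2 * t)) \<theta> =
    (exp w * charfun_delta t \<theta> + exp (- w) * charfun_delta (Suc t) \<theta>) / 2"
proof -
  define e where "e k = exp (2 * pi * \<i> * of_int k * complex_of_real \<theta>)" for k :: int
  define g where "g v = (\<lambda>k. complex_of_real (delta k v) * e k)" for v
  have charfun_g: "charfun_delta v \<theta> = infsum (g v) UNIV" for v
    by (simp add: charfun_delta_def g_def e_def)
  have e_shift: "e k = exp (of_int c * w) * e (k - c)" for k c
    unfolding e_def w_def by (rule exp_2pi_i_int_shift)
  have term_split: "g (Suc (2 * t)) k = exp w / 2 * g t (k - 1) + exp (- w) / 2 * g (Suc t) (k + 1)"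
    for k
  proof -
    have "g (Suc (2 * t)) k
        = complex_of_real (delta (k - 1) t) / 2 * e k + complex_of_real (delta (k + 1) (Suc t)) / 2 * e k"
      unfolding g_def delta_Suc_double by (simp add: field_simps)
    also have "\<dots> = exp w / 2 * g t (k - 1) + exp (- w) / 2 * g (Suc t) (k + 1)"
      by (subst (1) e_shift[of _ 1], subst (2) e_shift[of _ "- 1"]) (simp add: g_def mult_ac)
    finally show ?thesis .
  qed
  have summable: "g v summable_on UNIV" for v
    using charfun_delta_summable[of v \<theta>] by (simp add: g_def e_def)
  have "charfun_delta (Suc (2 * t)) \<theta>
      = infsum (\<lambda>k. exp w / 2 * g t (k - 1) + exp (- w) / 2 * g (Suc t) (k + 1)) UNIV"
    unfolding charfun_g by (rule infsum_cong) (rule term_split)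
  also have "\<dots> = infsum (\<lambda>k. exp w / 2 * g t (k - 1)) UNIV
      + infsum (\<lambda>k. exp (- w) / 2 * g (Suc t) (k + 1)) UNIV"
    using summable_on_int_shift[of "g t" "- 1"] summable_on_int_shift[of "g (Suc t)" 1] summable
    by (intro infsum_add summable_on_cmult_right) simp_all
  also have "\<dots> = exp w / 2 * infsum (g t) UNIV + exp (- w) / 2 * infsum (g (Suc t)) UNIV"
    using infsum_int_shift[of "g t" "- 1"] infsum_int_shift[of "g (Suc t)" 1]
    by (simp only: infsum_cmult_right') simp
  finally show ?thesis
    by (simp add: charfun_g field_simps)
qed

definition mgf_domain :: "complex set" where
  "mgf_domain = {w. - ln 2 < Re w}"

lemma open_mgf_domain: "open mgf_domain"
  unfolding mgf_domain_def by (rule open_halfspace_Re_gt)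

lemma zero_in_mgf_domain: "0 \<in> mgf_domain"
  by (simp add: mgf_domain_def)

lemma two_minus_exp_neg_nonzero:
  assumes "w \<in> mgf_domain"
  shows "2 - exp (- w) \<noteq> 0"
proof -
  have "norm (exp (- w)) = exp (- Re w)"
    by (simp add: norm_exp_eq_Re)
  also have "\<dots> < exp (ln 2)"
    using assms unfolding mgf_domain_def by (subst exp_less_cancel_iff) auto
  finally have "norm (exp (- w)) < 2"
    by simp
  then show ?thesis
    by (metis eq_iff_diff_eq_0 norm_numeral order_less_irrefl)
qed

(* The recursion of \<Sum>_j \<delta>(j,t) e^(jw) inherited from delta_double and delta_Suc_double; its instance
   at t = 0 is solved for the value at 1. *)
function mgf :: "nat \<Rightarrow> complex \<Rightarrow> complex" where
  "mgf t w =
    (if t = 0 then 1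
     else if t = 1 then exp w / (2 - exp (- w))
     else if even t then mgf (t div 2) w
     else (exp w * mgf (t div 2) w + exp (- w) * mgf (t div 2 + 1) w) / 2)"
  by auto
termination
  by (relation "inv_image less_than fst") (auto elim!: oddE)

declare mgf.simps [simp del]

lemma mgf_0 [simp]: "mgf 0 w = 1"
  by (simp add: mgf.simps)

lemma mgf_Suc_0: "mgf (Suc 0) w = exp w / (2 - exp (- w))"
  by (simp add: mgf.simps)

lemma mgf_double [simp]: "mgf (2 * t) w = mgf t w"
  by (cases "t = 0") (simp_all add: mgf.simps[of "2 * t"])

lemma mgf_Suc_double:
  assumes "1 \<le> t"
  shows "mgf (Suc (2 * t)) w = (exp w * mgf t w + exp (- w) * mgf (Suc t) w) / 2"
  using assms by (subst mgf.simps) simp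

lemma mgf_Suc_double_in_domain:
  assumes "w \<in> mgf_domain"
  shows "2 * mgf (Suc (2 * t)) w = exp w * mgf t w + exp (- w) * mgf (Suc t) w"
proof (cases "t = 0")
  case True
  have "exp w * exp (- w) = 1"
    by (simp add: exp_minus)
  moreover have "mgf 1 w * (2 - exp (- w)) = exp w"
    using two_minus_exp_neg_nonzero[OF assms] by (simp add: mgf_Suc_0)
  ultimately show ?thesis
    using True by (simp add: algebra_simps)
next
  case False
  then show ?thesis
    by (simp add: mgf_Suc_double)
qed

lemma mgf_at_0 [simp]: "mgf t 0 = 1"
  by (induction t rule: binary_induct) (simp_all add: mgf_Suc_0 mgf_Suc_double)

lemma mgf_in_Reals: "mgf t (of_real x) \<in> \<real>"
proof -
  have exp_real: "exp (complex_of_real x) \<in> \<real>" "exp (- complex_of_real x) \<in> \<real>"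
    by (metis exp_of_real Reals_of_real of_real_minus)+
  show ?thesis
    by (induction t rule: binary_induct) (use exp_real in \<open>simp_all add: mgf_Suc_0 mgf_Suc_double\<close>)
qed

lemma mgf_holomorphic: "mgf t holomorphic_on mgf_domain"
proof (induction t rule: binary_induct)
  case 0
  then show ?case
    by (simp add: holomorphic_on_const)
next
  case 1
  have "(\<lambda>w. exp w / (2 - exp (- w))) holomorphic_on mgf_domain"
    using two_minus_exp_neg_nonzero by (intro holomorphic_intros) auto
  moreover have "mgf 1 = (\<lambda>w. exp w / (2 - exp (- w)))"
    by (simp add: mgf_Suc_0 fun_eq_iff)
  ultimately show ?case
    by simp
next
  case (double u)
  then show ?case
    by simp
next
  case (Suc_double u)
  have "(\<lambda>w. (exp w * mgf u w + exp (- w) * mgf (Suc u) w) / 2) holomorphic_on mgf_domain"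
    using Suc_double by (intro holomorphic_intros) auto
  moreover have "mgf (Suc (2 * u)) = (\<lambda>w. (exp w * mgf u w + exp (- w) * mgf (Suc u) w) / 2)"
    using mgf_Suc_double[OF Suc_double(1)] by (simp add: fun_eq_iff)
  ultimately show ?case
    by simp
qed

lemma charfun_delta_eq_mgf: "charfun_delta t \<theta> = mgf t (2 * pi * \<i> * of_real \<theta>)"
proof -
  define w where "w = 2 * pi * \<i> * complex_of_real \<theta>"
  have w: "w \<in> mgf_domain"
    by (simp add: w_def mgf_domain_def)
  have "charfun_delta t \<theta> = mgf t w"
  proof (induction t rule: binary_induct)
    case 0
    then show ?case
      by (simp add: charfun_delta_0)
  next
    case 1
    have "charfun_delta 1 \<theta> * 2 = exp w + exp (- w) * charfun_delta 1 \<theta>"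
      using charfun_delta_Suc_double[where t = 0 and \<theta> = \<theta>] by (simp add: charfun_delta_0 w_def)
    then have "charfun_delta 1 \<theta> * (2 - exp (- w)) = exp w"
      by (simp add: algebra_simps)
    then show ?case
      using two_minus_exp_neg_nonzero[OF w] by (simp add: mgf_Suc_0 field_simps)
  next
    case (double u)
    then show ?case
      by (simp add: charfun_delta_double)
  next
    case (Suc_double u)
    then show ?case
      by (simp add: charfun_delta_Suc_double mgf_Suc_double w_def)
  qed
  then show ?thesis
    by (simp add: w_def)
qed

section \<open>The cumulant generating function\<close>

definition cgf :: "nat \<Rightarrow> complex \<Rightarrow> complex" where
  "cgf t w = Ln (mgf t w)"

lemma cgf_holomorphic_near_0:
  obtains r where "0 < r" "ball 0 r \<subseteq> mgf_domain" "\<And>w. w \<in> ball 0 r \<Longrightarrow> 0 < Re (mgf t w)"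
    "cgf t holomorphic_on ball 0 r"
proof -
  have "open (mgf_domain \<inter> mgf t -` {z. 0 < Re z})"
    using mgf_holomorphic open_mgf_domain open_halfspace_Re_gt
    by (intro continuous_open_preimage holomorphic_on_imp_continuous_on)
  moreover have "0 \<in> mgf_domain \<inter> mgf t -` {z. 0 < Re z}"
    using zero_in_mgf_domain by simp
  ultimately obtain r where r: "0 < r" "ball 0 r \<subseteq> mgf_domain \<inter> mgf t -` {z. 0 < Re z}"
    by (rule openE)
  have holo: "(\<lambda>w. Ln (mgf t w)) holomorphic_on ball 0 r"
  proof (rule holomorphic_on_Ln')
    show "mgf t w \<notin> \<real>\<^sub>\<le>\<^sub>0" if "w \<in> ball 0 r" for w
      using r(2) that by (auto simp: nonpos_Reals_def)
    show "mgf t holomorphic_on ball 0 r"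
      by (rule holomorphic_on_subset[OF mgf_holomorphic]) (use r(2) in auto)
  qed
  show ?thesis
  proof (rule that[OF r(1)])
    show "ball 0 r \<subseteq> mgf_domain"
      using r(2) by blast
    show "0 < Re (mgf t w)" if "w \<in> ball 0 r" for w
      using r(2) that by blast
    show "cgf t holomorphic_on ball 0 r"
      using holo by (simp add: cgf_def[abs_def])
  qed
qed

definition mgf_fps :: "nat \<Rightarrow> complex fps" where
  "mgf_fps t = fps_expansion (mgf t) 0"

definition cgf_fps :: "nat \<Rightarrow> complex fps" where
  "cgf_fps t = fps_expansion (cgf t) 0"

lemma mgf_has_fps_expansion: "mgf t has_fps_expansion mgf_fps t"
  unfolding mgf_fps_def
  by (rule has_fps_expansion_fps_expansion[OF open_mgf_domain zero_in_mgf_domain mgf_holomorphic])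

lemma cgf_has_fps_expansion: "cgf t has_fps_expansion cgf_fps t"
proof -
  obtain r where "0 < r" "cgf t holomorphic_on ball 0 r"
    using cgf_holomorphic_near_0 by metis
  then show ?thesis
    unfolding cgf_fps_def by (intro has_fps_expansion_fps_expansion[of "ball 0 r"]) auto
qed

lemma mgf_fps_nth_0: "fps_nth (mgf_fps t) 0 = 1"
  by (simp add: mgf_fps_def fps_expansion_def)

lemma mgf_fps_double: "mgf_fps (2 * t) = mgf_fps t"
proof -
  have "mgf (2 * t) = mgf t"
    by (simp add: fun_eq_iff)
  then show ?thesis
    by (simp add: mgf_fps_def)
qed

lemma cgf_fps_double: "cgf_fps (2 * t) = cgf_fps t"
  by (simp add: cgf_fps_def cgf_def[abs_def])

lemma mgf_fps_Suc_double:
  "2 * mgf_fps (Suc (2 * t)) = fps_exp 1 * mgf_fps t + fps_exp (- 1) * mgf_fps (Suc t)"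
proof -
  have lhs: "(\<lambda>w. 2 * mgf (Suc (2 * t)) w) has_fps_expansion fps_const 2 * mgf_fps (Suc (2 * t))"
    by (intro fps_expansion_intros mgf_has_fps_expansion)
  have "\<forall>\<^sub>F w in nhds 0. 2 * mgf (Suc (2 * t)) w = exp w * mgf t w + exp (- w) * mgf (Suc t) w"
    using eventually_nhds_in_open[OF open_mgf_domain zero_in_mgf_domain]
    by eventually_elim (rule mgf_Suc_double_in_domain)
  moreover have "(\<lambda>w. exp w * mgf t w + exp (- w) * mgf (Suc t) w)
      has_fps_expansion fps_exp 1 * mgf_fps t + fps_exp (- 1) * mgf_fps (Suc t)"
    by (intro fps_expansion_intros mgf_has_fps_expansion)
  ultimately have "(\<lambda>w. 2 * mgf (Suc (2 * t)) w)
      has_fps_expansion fps_exp 1 * mgf_fps t + fps_exp (- 1) * mgf_fps (Suc t)"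
    by (rule has_fps_expansion_cong[OF _ refl, THEN iffD2])
  from fps_expansion_unique_complex[OF lhs this] show ?thesis
    by (simp add: numeral_fps_const)
qed

lemma mgf_fps_log_deriv: "fps_deriv (mgf_fps t) = mgf_fps t * fps_deriv (cgf_fps t)"
proof -
  obtain r where r: "0 < r" "ball 0 r \<subseteq> mgf_domain" "\<And>w. w \<in> ball 0 r \<Longrightarrow> 0 < Re (mgf t w)"
    "cgf t holomorphic_on ball 0 r"
    using cgf_holomorphic_near_0 by metis
  have "mgf t w * deriv (cgf t) w = deriv (mgf t) w" if w: "w \<in> ball 0 r" for w
  proof -
    have "mgf t w \<notin> \<real>\<^sub>\<le>\<^sub>0"
      using r(3)[OF w] by (auto simp: nonpos_Reals_def)
    moreover have "(mgf t has_field_derivative deriv (mgf t) w) (at w)"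
      using r(2) w by (intro holomorphic_derivI[OF mgf_holomorphic open_mgf_domain]) auto
    ultimately have "(cgf t has_field_derivative inverse (mgf t w) * deriv (mgf t) w) (at w)"
      unfolding cgf_def[abs_def] by (rule DERIV_chain2[OF has_field_derivative_Ln])
    moreover have "mgf t w \<noteq> 0"
      using r(3)[OF w] by auto
    ultimately show ?thesis
      by (simp add: DERIV_imp_deriv)
  qed
  then have "\<forall>\<^sub>F w in nhds 0. mgf t w * deriv (cgf t) w = deriv (mgf t) w"
    using eventually_nhds_in_open[of "ball 0 r" 0] r(1) by (auto elim: eventually_mono)
  moreover have "deriv (mgf t) has_fps_expansion fps_deriv (mgf_fps t)"
    by (intro fps_expansion_intros mgf_has_fps_expansion)
  ultimately have "(\<lambda>w. mgf t w * deriv (cgf t) w) has_fps_expansion fps_deriv (mgf_fps t)"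
    by (rule has_fps_expansion_cong[OF _ refl, THEN iffD2])
  moreover have "(\<lambda>w. mgf t w * deriv (cgf t) w) has_fps_expansion mgf_fps t * fps_deriv (cgf_fps t)"
    by (intro fps_expansion_intros mgf_has_fps_expansion cgf_has_fps_expansion)
  ultimately show ?thesis
    by (rule fps_expansion_unique_complex)
qed

lemma cgf_fps_nth_in_Reals: "fps_nth (cgf_fps t) n \<in> \<real>"
proof -
  obtain r where r: "0 < r" "\<And>w. w \<in> ball 0 r \<Longrightarrow> 0 < Re (mgf t w)"
    "cgf t holomorphic_on ball 0 r"
    using cgf_holomorphic_near_0 by metis
  have "cgf t (of_real x) \<in> \<real>" if "\<bar>x\<bar> < r" for x
    using mgf_in_Reals[of t x] r(2)[of "of_real x"] that by (simp add: cgf_def)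
  from higher_deriv_in_Reals_if_Reals_on_segment[OF r(3) this, of 0 n]
  have "(deriv ^^ n) (cgf t) 0 \<in> \<real>"
    using r(1) by simp
  then have "(deriv ^^ n) (cgf t) 0 / fact n \<in> \<real>"
    by (metis Reals_divide Reals_of_nat of_nat_fact)
  then show ?thesis
    by (simp add: cgf_fps_def fps_expansion_def)
qed

definition mgf_ratio :: "nat \<Rightarrow> complex fps" where
  "mgf_ratio t = mgf_fps (Suc t) * inverse (mgf_fps t)"

definition cgf_incr :: "nat \<Rightarrow> complex fps" where
  "cgf_incr t = cgf_fps (Suc t) - cgf_fps t"

lemma mgf_fps_inverse: "mgf_fps t * inverse (mgf_fps t) = 1"
  by (rule inverse_mult_eq_1') (simp add: mgf_fps_nth_0)

lemma mgf_ratio_nth_0: "fps_nth (mgf_ratio t) 0 = 1"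
  by (simp add: mgf_ratio_def mgf_fps_nth_0)

lemma mgf_ratio_log_deriv: "fps_deriv (mgf_ratio t) = mgf_ratio t * fps_deriv (cgf_incr t)"
proof -
  define M N I where "M = mgf_fps t" "N = mgf_fps (Suc t)" "I = inverse (mgf_fps t)"
  have MI: "M * I = 1"
    by (simp add: M_N_I_def mgf_fps_inverse)
  have dI: "fps_deriv I = - fps_deriv M * I\<^sup>2"
    unfolding M_N_I_def by (rule fps_inverse_deriv) (simp add: mgf_fps_nth_0)
  have dM: "fps_deriv M = M * fps_deriv (cgf_fps t)"
    and dN: "fps_deriv N = N * fps_deriv (cgf_fps (Suc t))"
    by (simp_all add: M_N_I_def mgf_fps_log_deriv)
  have "fps_deriv (N * I) = N * fps_deriv (cgf_fps (Suc t)) * I - N * (M * fps_deriv (cgf_fps t)) * I\<^sup>2"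
    using dI dM dN by (simp add: fps_deriv_mult algebra_simps)
  also have "N * (M * fps_deriv (cgf_fps t)) * I\<^sup>2 = N * I * fps_deriv (cgf_fps t) * (M * I)"
    by (simp add: power2_eq_square algebra_simps)
  also have "\<dots> = N * I * fps_deriv (cgf_fps t)"
    by (simp add: MI)
  finally have "fps_deriv (N * I) = N * I * fps_deriv (cgf_fps (Suc t) - cgf_fps t)"
    by (simp add: algebra_simps)
  then show ?thesis
    by (simp add: mgf_ratio_def cgf_incr_def M_N_I_def)
qed

lemma mgf_ratio_double: "2 * mgf_ratio (2 * t) = fps_exp 1 + fps_exp (- 1) * mgf_ratio t"
proof -
  have "2 * mgf_ratio (2 * t) = (2 * mgf_fps (Suc (2 * t))) * inverse (mgf_fps t)"
    by (simp add: mgf_ratio_def mgf_fps_double)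
  also have "\<dots> = fps_exp 1 * (mgf_fps t * inverse (mgf_fps t)) + fps_exp (- 1) * mgf_ratio t"
    unfolding mgf_fps_Suc_double by (simp add: mgf_ratio_def algebra_simps)
  finally show ?thesis
    by (simp add: mgf_fps_inverse)
qed

lemma cgf_incr_Suc_double: "cgf_incr (Suc (2 * t)) = cgf_incr t - cgf_incr (2 * t)"
  using cgf_fps_double[of "Suc t"] by (simp add: cgf_incr_def cgf_fps_double)

definition cgf_incr_coeff :: "nat \<Rightarrow> nat \<Rightarrow> real" where
  "cgf_incr_coeff j t = Re (fps_nth (cgf_incr t) j)"

lemma cgf_incr_nth: "fps_nth (cgf_incr t) j = of_real (cgf_incr_coeff j t)"
  using cgf_fps_nth_in_Reals[of "Suc t" j] cgf_fps_nth_in_Reals[of t j]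
  by (simp add: cgf_incr_coeff_def cgf_incr_def)

lemma cgf_incr_coeff_Suc_double:
  "cgf_incr_coeff j (Suc (2 * t)) = cgf_incr_coeff j t - cgf_incr_coeff j (2 * t)"
  by (simp add: cgf_incr_coeff_def cgf_incr_Suc_double)

lemma cgf_incr_coeff_double:
  fixes t :: nat
  defines "c \<equiv> \<lambda>j. cgf_incr_coeff j t" and "c' \<equiv> \<lambda>j. cgf_incr_coeff j (2 * t)"
  shows "c' 1 = c 1 / 2"
    and "c 1 = 0 \<Longrightarrow> c' 2 = c 2 / 2 + 1 / 2"
    and "c 1 = 0 \<Longrightarrow> c' 3 = c 3 / 2 - c 2 / 2"
    and "c 1 = 0 \<Longrightarrow> c' 4 = c 4 / 2 + ((c 2)\<^sup>2 - 4 * c 3) / 8 - 1 / 12"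
    and "c 1 = 0 \<Longrightarrow> c' 5 = c 5 / 2 + (c 2 * c 3 - 2 * c 4) / 4 + c 2 / 6"
proof -
  note average = log_coeffs_of_exp_average[OF mgf_ratio_log_deriv[of t] mgf_ratio_nth_0[of t]
      mgf_ratio_log_deriv[of "2 * t"] mgf_ratio_double[of t], unfolded cgf_incr_nth]
  have real_eq: "x = y" if "complex_of_real x = complex_of_real y" for x y
    using that by simp
  show "c' 1 = c 1 / 2"
    using average(1) unfolding c_def c'_def by (intro real_eq) simp
  assume "c 1 = 0"
  then have c1: "complex_of_real (cgf_incr_coeff 1 t) = 0"
    by (simp add: c_def)
  show "c' 2 = c 2 / 2 + 1 / 2"
    using average(2)[OF c1] unfolding c_def c'_def by (intro real_eq) simp
  show "c' 3 = c 3 / 2 - c 2 / 2"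
    using average(3)[OF c1] unfolding c_def c'_def by (intro real_eq) simp
  show "c' 4 = c 4 / 2 + ((c 2)\<^sup>2 - 4 * c 3) / 8 - 1 / 12"
    using average(4)[OF c1] unfolding c_def c'_def by (intro real_eq) simp
  show "c' 5 = c 5 / 2 + (c 2 * c 3 - 2 * c 4) / 4 + c 2 / 6"
    using average(5)[OF c1] unfolding c_def c'_def by (intro real_eq) simp
qed

lemma cgf_incr_coeff_1: "cgf_incr_coeff 1 t = 0"
proof -
  have "\<bar>cgf_incr_coeff 1 t\<bar> \<le> 0"
  proof (rule abs_le_if_halving_recursion)
    fix t
    show "cgf_incr_coeff 1 (2 * t) = cgf_incr_coeff 1 t / 2 + 0"
      using cgf_incr_coeff_double(1)[of t] by simp
    show "cgf_incr_coeff 1 (Suc (2 * t)) = cgf_incr_coeff 1 t / 2 - 0"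
      using cgf_incr_coeff_double(1)[of t] cgf_incr_coeff_Suc_double[of 1 t] by simp
  qed simp
  then show ?thesis
    by simp
qed

lemma cgf_incr_coeff_bounds:
  "\<bar>cgf_incr_coeff 2 t\<bar> \<le> 1" "\<bar>cgf_incr_coeff 3 t\<bar> \<le> 1"
  "\<bar>cgf_incr_coeff 4 t\<bar> \<le> 7 / 6" "\<bar>cgf_incr_coeff 5 t\<bar> \<le> 2"
proof -
  note recursion = cgf_incr_coeff_double(2-5)[OF cgf_incr_coeff_1] cgf_incr_coeff_Suc_double
  let ?c = "\<lambda>j t. cgf_incr_coeff j t"
  have c2: "\<bar>?c 2 t\<bar> \<le> 1" for t
    by (rule abs_le_if_halving_recursion[where \<delta> = "\<lambda>_. 1 / 2"]) (simp_all add: recursion)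
  have c3: "\<bar>?c 3 t\<bar> \<le> 1" for t
    by (rule abs_le_if_halving_recursion[where \<delta> = "\<lambda>t. - ?c 2 t / 2"])
      (use c2 in \<open>simp_all add: recursion\<close>)
  have c4: "\<bar>?c 4 t\<bar> \<le> 7 / 6" for t
  proof (rule abs_le_if_halving_recursion[where \<delta> = "\<lambda>t. ((?c 2 t)\<^sup>2 - 4 * ?c 3 t) / 8 - 1 / 12"])
    fix t
    have "0 \<le> (?c 2 t)\<^sup>2" "(?c 2 t)\<^sup>2 \<le> 1"
      using c2[of t] by (auto simp: abs_square_le_1)
    moreover have "- 1 \<le> ?c 3 t" "?c 3 t \<le> 1"
      using c3[of t] by (simp_all add: abs_le_iff)
    ultimately show "\<bar>((?c 2 t)\<^sup>2 - 4 * ?c 3 t) / 8 - 1 / 12\<bar> \<le> 7 / 6 / 2"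
      unfolding abs_le_iff by argo
  qed (simp_all add: recursion)
  have c5: "\<bar>?c 5 t\<bar> \<le> 2" for t
  proof (rule abs_le_if_halving_recursion[where \<delta> = "\<lambda>t. (?c 2 t * ?c 3 t - 2 * ?c 4 t) / 4 + ?c 2 t / 6"])
    fix t
    have "\<bar>?c 2 t * ?c 3 t\<bar> \<le> 1"
      using c2[of t] c3[of t] by (simp add: abs_mult mult_le_one)
    then have "- 1 \<le> ?c 2 t * ?c 3 t" "?c 2 t * ?c 3 t \<le> 1"
      by (simp_all add: abs_le_iff)
    moreover have "- 1 \<le> ?c 2 t" "?c 2 t \<le> 1" "- 7 / 6 \<le> ?c 4 t" "?c 4 t \<le> 7 / 6"
      using c2[of t] c4[of t] by (simp_all add: abs_le_iff)
    ultimately show "\<bar>(?c 2 t * ?c 3 t - 2 * ?c 4 t) / 4 + ?c 2 t / 6\<bar> \<le> 2 / 2"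
      unfolding abs_le_iff by argo
  qed (simp_all add: recursion)
  show "\<bar>?c 2 t\<bar> \<le> 1" "\<bar>?c 3 t\<bar> \<le> 1" "\<bar>?c 4 t\<bar> \<le> 7 / 6" "\<bar>?c 5 t\<bar> \<le> 2"
    by (fact c2 c3 c4 c5)+
qed

lemma kappa_eq_cgf_fps_nth: "kappa j t = fact j * Re (fps_nth (cgf_fps t) j)"
proof -
  obtain r where r: "0 < r" "cgf t holomorphic_on ball 0 r"
    using cgf_holomorphic_near_0 by metis
  define c where "c m = fact m * Re (fps_nth (cgf_fps t) m)" for m
  have coeff: "complex_of_real (c m) / of_nat (fact m) = (deriv ^^ m) (cgf t) 0 / fact m" for m
    using cgf_fps_nth_in_Reals[of t m] by (simp add: c_def cgf_fps_def fps_expansion_def)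
  let ?P = "\<lambda>c :: nat \<Rightarrow> real. \<forall>\<^sub>F \<theta> in nhds (0::real).
      (\<lambda>m. complex_of_real (c m) / of_nat (fact m) * (2 * pi * \<i> * of_real \<theta>) ^ m)
        sums Ln (charfun_delta t \<theta>)"
  have "?P c"
  proof -
    have "\<forall>\<^sub>F \<theta> in nhds 0. \<theta> \<in> ball 0 (r / (2 * pi))"
      using r(1) by (intro eventually_nhds_in_open) auto
    then show ?thesis
    proof eventually_elim
      case (elim \<theta>)
      then have "2 * pi * \<bar>\<theta>\<bar> < r"
        using pi_gt_zero by (simp add: field_simps)
      then have "2 * pi * \<i> * of_real \<theta> \<in> ball 0 r"
        by (simp add: norm_mult)
      from holomorphic_power_series[OF r(2) this] show ?case
        unfolding coeff by (simp add: cgf_def charfun_delta_eq_mgf)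
    qed
  qed
  moreover have "c' = c" if "?P c'" for c'
  proof -
    have "(\<lambda>m. complex_of_real (c' m) / of_nat (fact m)) = (\<lambda>m. complex_of_real (c m) / of_nat (fact m))"
      by (rule powser_coeffs_unique_on_segment[OF _ that \<open>?P c\<close>]) simp
    then show ?thesis
      by (simp add: fun_eq_iff)
  qed
  ultimately have "(THE c. ?P c) = c"
    by (rule the_equality)
  then show ?thesis
    unfolding kappa_def c_def by simp
qed

lemma kappa_Suc_diff: "kappa j (Suc t) - kappa j t = fact j * cgf_incr_coeff j t"
  by (simp add: kappa_eq_cgf_fps_nth cgf_incr_coeff_def cgf_incr_def algebra_simps)

theorem lemma2p2:
  fixes t :: nat
  shows "\<bar>kappa 2 (t + 1) - kappa 2 t\<bar> \<le> 2 \<and>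
         \<bar>kappa 3 (t + 1) - kappa 3 t\<bar> \<le> 6 \<and>
         \<bar>kappa 4 (t + 1) - kappa 4 t\<bar> \<le> 28 \<and>
         \<bar>kappa 5 (t + 1) - kappa 5 t\<bar> \<le> 240"
proof -
  have "\<bar>kappa j (t + 1) - kappa j t\<bar> = fact j * \<bar>cgf_incr_coeff j t\<bar>" for j
    by (simp add: kappa_Suc_diff abs_mult)
  then show ?thesis
    using cgf_incr_coeff_bounds[of t] by (simp add: fact_numeral)
qed

end
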